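(* Let $M$ be a canonical dtpla and $N$ a total dtop (all of whose states are reachable) such that $[\![M]\!]=[\![N]\!]$, and let $\varphi$ be the (unique) aheadness mapping from $N$ to $M$. Then for every $s\in T_\Sigma$ and $q\in Q_N$, if $\delta_M(s)=p$ then $$q_N(s)=\varphi(q,p)[\langle\bar q,p\rangle\leftarrow\bar q_M(s)\mid\bar q\in Q_M].$$
   Context: Trees. $T_\Delta(Z)$ is the set of trees over a ranked alphabet $\Delta$ with extra nullary symbols $Z$; $t/v$ is the subtree at node $v\in\mathbb N_+^*$; $\bot$ is a special nullary symbol. A $\Sigma$-context is $C\in T_\Sigma(\{\bot\})$ with exactly one occurrence of $\bot$; $\mathcal C_\Sigma$ is their set; $C[t]$ replaces $\bot$ by $t$. Dtlas. A dtla $M$ from $\Sigma$ to $\Delta$ consists of a finite set $Q_M$ of states, a total deterministic bottom-up tree automaton with finite state set $P_M$ and transitions $\delta(a,p_1,\dots,p_k)\in P_M$, extended to $\delta_M:T_\Sigma\to P_M$ ($[\![p]\!]_M=\delta_M^{-1}(p)$), an axiom $A_M(p)\in T_\Delta(Q_M(\{x_0\}))$ for each $p$, and at most one rule $q(a(x_1\langle p_1\rangle,\dots,x_k\langle p_k\rangle))\to\mathrm{rhs}_M(q,a,p_1,\dots,p_k)\in T_\Delta(Q_M(X_k))$ for each $q,a\in\Sigma^{(k)},p_1,\dots,p_k$. Semantics: $q_M(a(s_1,\dots,s_k))=\mathrm{rhs}_M(q,a,\delta_M(s_1),\dots,\delta_M(s_k))[q'(x_i)\leftarrow q'_M(s_i)]$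 (partial function $[\![q]\!]_M$), $M(s)=A_M(\delta_M(s))[q(x_0)\leftarrow q_M(s)]$ (function $[\![M]\!]$). Total: $[\![M]\!]$ is total. A dtop is a dtla with a single look-ahead state, written $\bot$; for a dtop $N$ write $q_N(s)$, $A_N$, $\mathrm{rhs}_N(q,a)$. A dtpla is a dtla with $|P_M|\ge2$. For $C\in\mathcal C_\Sigma$, $p\in P_M$, $M(C[p])\in T_\Delta(Q_M\times P_M)$ is the output on $C$ with the hole treated as a leaf of look-ahead state $p$ and $q_M(p)=\langle q,p\rangle$; for a dtop $N$, $N(C)=N(C[\bot])$. A state $q$ is reachable if $\langle q,p\rangle$ labels a node of $M(C[p])$ for some $C,p$. $M$ is la-uniform if there is $\rho_M:Q_M\to P_M$ such that the domain of $[\![q]\!]_M$ is $[\![\rho_M(q)]\!]_M$, every $q(x_0)$ in $A_M(p)$ has $\rho_M(q)=p$, every $q'(x_i)$ in $\mathrm{rhs}_M(q,a,p_1,\dots,p_k)$ has $\rho_M(q')=p_i$, and the rule for $q,a,p_1,\dots,p_k$ exists iff $\delta(a,p_1,\dots,p_k)=\rho_M(q)$. $M$ is earliest if there is no state $q$ and $d\in\Delta$ with $q_M(s)$ having root label $d$ for all $s$ in the domain of $[\![q]\!]_M$. $M$ is canonical if it is total, la-uniform, earliest, all states are reachable, and distinct states have distinct translations $[\![q]\!]_M$. Aheadness mapping: a function $\varphi:Q_N\times P_M\to T_\Delta(Q_M\times P_M)$ such that $M(C[p])=N(C)[\langle q,\bot\rangle\leftarrow\varphi(q,p)\mid q\in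 Q_N]$ for all $C\in\mathcal C_\Sigma$, $p\in P_M$. (Under the hypotheses it exists and is unique.) *)

theory Defs
  imports Main
begin

text \<open>Trees over a ranked alphabet with extra nullary symbols (leaves) of type 'v.
  A ranked alphabet is a finite set of (symbol, rank) pairs assigning one rank per symbol.\<close>

datatype (syms: 'f, vars: 'v) tr = Nd 'f "('f, 'v) tr list" | Lf 'v

definition ranked_alphabet :: "('f \<times> nat) set \<Rightarrow> bool" where
  "ranked_alphabet A \<longleftrightarrow> finite A \<and> (\<forall>f k k'. (f, k) \<in> A \<longrightarrow> (f, k') \<in> A \<longrightarrow> k = k')"

fun wf_tr :: "('f \<times> nat) set \<Rightarrow> ('f, 'v) tr \<Rightarrow> bool" where
  "wf_tr A (Nd f ts) = ((f, length ts) \<in> A \<and> (\<forall>t \<in> set ts. wf_tr A t))"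
| "wf_tr A (Lf v) = True"

definition trees :: "('f \<times> nat) set \<Rightarrow> 'v set \<Rightarrow> ('f, 'v) tr set" where
  "trees A Z = {t. wf_tr A t \<and> vars t \<subseteq> Z}"

definition gtrees :: "('f \<times> nat) set \<Rightarrow> ('f, 'v) tr set" where
  "gtrees A = trees A {}"

fun nleaves :: "('f, 'v) tr \<Rightarrow> nat" where
  "nleaves (Lf v) = 1"
| "nleaves (Nd f ts) = sum_list (map nleaves ts)"

text \<open>Sigma-contexts: the hole bottom is the unique leaf Lf ().\<close>
definition contexts :: "('f \<times> nat) set \<Rightarrow> ('f, unit) tr set" where
  "contexts A = {C. wf_tr A C \<and> nleaves C = 1}"

fun root_sym :: "('f, 'v) tr \<Rightarrow> 'f option" where
  "root_sym (Nd f ts) = Some f"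
| "root_sym (Lf v) = None"

fun all_some :: "'a option list \<Rightarrow> 'a list option" where
  "all_some [] = Some []"
| "all_some (x # xs) = (case x of None \<Rightarrow> None | Some y \<Rightarrow>
      (case all_some xs of None \<Rightarrow> None | Some ys \<Rightarrow> Some (y # ys)))"

fun subst :: "('v \<Rightarrow> ('g, 'w) tr option) \<Rightarrow> ('g, 'v) tr \<Rightarrow> ('g, 'w) tr option" where
  "subst \<sigma> (Lf v) = \<sigma> v"
| "subst \<sigma> (Nd f ts) = map_option (Nd f) (all_some (map (subst \<sigma>) ts))"

text \<open>rules q a ps: right-hand side with leaves (q', i) standing for q'(x_i), 1 <= i <= k.
  axiom p: axiom with leaves q standing for q(x_0).\<close>
record ('f, 'g, 'q, 'p) dtla =
  states :: "'q set"
  lastates :: "'p set"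
  trans :: "'f \<Rightarrow> 'p list \<Rightarrow> 'p"
  axiom :: "'p \<Rightarrow> ('g, 'q) tr"
  rules :: "'q \<Rightarrow> 'f \<Rightarrow> 'p list \<Rightarrow> ('g, 'q \<times> nat) tr option"

definition wf_dtla :: "('f \<times> nat) set \<Rightarrow> ('g \<times> nat) set \<Rightarrow> ('f, 'g, 'q, 'p) dtla \<Rightarrow> bool" where
  "wf_dtla \<Sigma> \<Delta> M \<longleftrightarrow>
     ranked_alphabet \<Sigma> \<and> ranked_alphabet \<Delta> \<and>
     finite (states M) \<and> finite (lastates M) \<and> lastates M \<noteq> {} \<and>
     (\<forall>a k ps. (a, k) \<in> \<Sigma> \<longrightarrow> length ps = k \<longrightarrow> set ps \<subseteq> lastates M \<longrightarrow>
        trans M a ps \<in> lastates M) \<and>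
     (\<forall>p \<in> lastates M. axiom M p \<in> trees \<Delta> (states M)) \<and>
     (\<forall>q a k ps r. q \<in> states M \<longrightarrow> (a, k) \<in> \<Sigma> \<longrightarrow> length ps = k \<longrightarrow> set ps \<subseteq> lastates M \<longrightarrow>
        rules M q a ps = Some r \<longrightarrow> r \<in> trees \<Delta> (states M \<times> {1..k}))"

fun laRun :: "('f, 'g, 'q, 'p, 'x) dtla_scheme \<Rightarrow> ('v \<Rightarrow> 'p) \<Rightarrow> ('f, 'v) tr \<Rightarrow> 'p" where
  "laRun M \<eta> (Lf v) = \<eta> v"
| "laRun M \<eta> (Nd a ts) = trans M a (map (laRun M \<eta>) ts)"

fun sem :: "('f, 'g, 'q, 'p, 'x) dtla_scheme \<Rightarrow> ('v \<Rightarrow> 'p) \<Rightarrow> ('v \<Rightarrow> 'q \<Rightarrow> ('g, 'z) tr option)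
            \<Rightarrow> ('f, 'v) tr \<Rightarrow> 'q \<Rightarrow> ('g, 'z) tr option" where
  "sem M \<eta> lo (Lf v) q = lo v q"
| "sem M \<eta> lo (Nd a ts) q =
     (let R = map (sem M \<eta> lo) ts in
      case rules M q a (map (laRun M \<eta>) ts) of
        None \<Rightarrow> None
      | Some r \<Rightarrow> subst (\<lambda>(q', i). if 1 \<le> i \<and> i \<le> length R then (R ! (i - 1)) q' else None) r)"

definition deltaM :: "('f, 'g, 'q, 'p, 'x) dtla_scheme \<Rightarrow> ('f, unit) tr \<Rightarrow> 'p" where
  "deltaM M s = laRun M (\<lambda>_. undefined) s"

definition qsem :: "('f, 'g, 'q, 'p, 'x) dtla_scheme \<Rightarrow> 'q \<Rightarrow> ('f, unit) tr \<Rightarrow> ('g, 'z) tr option" where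
  "qsem M q s = sem M (\<lambda>_. undefined) (\<lambda>_ _. None) s q"

definition Msem :: "('f, 'g, 'q, 'p, 'x) dtla_scheme \<Rightarrow> ('f, unit) tr \<Rightarrow> ('g, 'z) tr option" where
  "Msem M s = subst (\<lambda>q. qsem M q s) (axiom M (deltaM M s))"

text \<open>M(C[p]): hole is a leaf with look-ahead state p and q_M(p) = <q,p>.\<close>
definition Mctx :: "('f, 'g, 'q, 'p, 'x) dtla_scheme \<Rightarrow> ('f, unit) tr \<Rightarrow> 'p \<Rightarrow> ('g, 'q \<times> 'p) tr option" where
  "Mctx M C p = subst (\<lambda>q. sem M (\<lambda>_. p) (\<lambda>_ q'. Some (Lf (q', p))) C q)
                      (axiom M (laRun M (\<lambda>_. p) C))"

definition total :: "('f \<times> nat) set \<Rightarrow> ('f, 'g, 'q, 'p, 'x) dtla_scheme \<Rightarrow> bool" where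
  "total \<Sigma> M \<longleftrightarrow> (\<forall>s \<in> gtrees \<Sigma>. Msem M s \<noteq> (None :: ('g, unit) tr option))"

definition reachable :: "('f \<times> nat) set \<Rightarrow> ('f, 'g, 'q, 'p, 'x) dtla_scheme \<Rightarrow> 'q \<Rightarrow> bool" where
  "reachable \<Sigma> M q \<longleftrightarrow>
     (\<exists>C \<in> contexts \<Sigma>. \<exists>p \<in> lastates M. \<exists>t. Mctx M C p = Some t \<and> (q, p) \<in> vars t)"

definition la_uniform :: "('f \<times> nat) set \<Rightarrow> ('f, 'g, 'q, 'p, 'x) dtla_scheme \<Rightarrow> bool" where
  "la_uniform \<Sigma> M \<longleftrightarrow> (\<exists>\<rho>. (\<forall>q \<in> states M. \<rho> q \<in> lastates M) \<and>
     (\<forall>q \<in> states M. \<forall>s \<in> gtrees \<Sigma>.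
        (qsem M q s \<noteq> (None :: ('g, unit) tr option)) \<longleftrightarrow> deltaM M s = \<rho> q) \<and>
     (\<forall>p \<in> lastates M. \<forall>q \<in> vars (axiom M p). \<rho> q = p) \<and>
     (\<forall>q a k ps r. q \<in> states M \<longrightarrow> (a, k) \<in> \<Sigma> \<longrightarrow> length ps = k \<longrightarrow> set ps \<subseteq> lastates M \<longrightarrow>
        rules M q a ps = Some r \<longrightarrow> (\<forall>(q', i) \<in> vars r. \<rho> q' = ps ! (i - 1))) \<and>
     (\<forall>q a k ps. q \<in> states M \<longrightarrow> (a, k) \<in> \<Sigma> \<longrightarrow> length ps = k \<longrightarrow> set ps \<subseteq> lastates M \<longrightarrow>
        (rules M q a ps \<noteq> None \<longleftrightarrow> trans M a ps = \<rho> q)))"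

definition earliest :: "('f \<times> nat) set \<Rightarrow> ('f, 'g, 'q, 'p, 'x) dtla_scheme \<Rightarrow> bool" where
  "earliest \<Sigma> M \<longleftrightarrow> \<not> (\<exists>q \<in> states M. \<exists>d. \<forall>s \<in> gtrees \<Sigma>. \<forall>t.
      qsem M q s = Some (t :: ('g, unit) tr) \<longrightarrow> root_sym t = Some d)"

definition canonical :: "('f \<times> nat) set \<Rightarrow> ('f, 'g, 'q, 'p, 'x) dtla_scheme \<Rightarrow> bool" where
  "canonical \<Sigma> M \<longleftrightarrow> total \<Sigma> M \<and> la_uniform \<Sigma> M \<and> earliest \<Sigma> M \<and>
     (\<forall>q \<in> states M. reachable \<Sigma> M q) \<and>
     (\<forall>q \<in> states M. \<forall>q' \<in> states M. q \<noteq> q' \<longrightarrow>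
        (\<exists>s \<in> gtrees \<Sigma>. qsem M q s \<noteq> (qsem M q' s :: ('g, unit) tr option)))"

text \<open>A dtop: a dtla with the single look-ahead state ().  A dtpla: at least two look-ahead states.\<close>
definition is_dtop :: "('f \<times> nat) set \<Rightarrow> ('g \<times> nat) set \<Rightarrow> ('f, 'g, 'n, unit) dtla \<Rightarrow> bool" where
  "is_dtop \<Sigma> \<Delta> N \<longleftrightarrow> wf_dtla \<Sigma> \<Delta> N \<and> lastates N = {()}"

definition is_dtpla :: "('f \<times> nat) set \<Rightarrow> ('g \<times> nat) set \<Rightarrow> ('f, 'g, 'q, 'p) dtla \<Rightarrow> bool" where
  "is_dtpla \<Sigma> \<Delta> M \<longleftrightarrow> wf_dtla \<Sigma> \<Delta> M \<and> card (lastates M) \<ge> 2"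

definition aheadness :: "('f \<times> nat) set \<Rightarrow> ('g \<times> nat) set \<Rightarrow> ('f, 'g, 'q, 'p) dtla \<Rightarrow> ('f, 'g, 'n, unit) dtla
     \<Rightarrow> ('n \<Rightarrow> 'p \<Rightarrow> ('g, 'q \<times> 'p) tr) \<Rightarrow> bool" where
  "aheadness \<Sigma> \<Delta> M N \<phi> \<longleftrightarrow>
     (\<forall>q \<in> states N. \<forall>p \<in> lastates M. \<phi> q p \<in> trees \<Delta> (states M \<times> lastates M)) \<and>
     (\<forall>C \<in> contexts \<Sigma>. \<forall>p \<in> lastates M.
        Mctx M C p = Option.bind (Mctx N C ()) (subst (\<lambda>(q, u). Some (\<phi> q p))))"

end

theory Submission
  imports Defs
begin

text \<open>Reachability of \<open>q\<close> yields a context \<open>C\<close> with \<open>\<langle>q,\<bottom>\<rangle>\<close> occurring in \<open>N(C)\<close>. Plugging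
  \<open>s\<close> into the hole, \<open>N(C[s])\<close> is \<open>N(C)\<close> with every \<open>\<langle>q',\<bottom>\<rangle>\<close> replaced by \<open>q'\<^sub>N(s)\<close>, while
  \<open>M(C[s])\<close> is \<open>M(C[p])\<close> with every \<open>\<langle>q',p\<rangle>\<close> replaced by \<open>q'\<^sub>M(s)\<close>; by the aheadness
  equation the latter is \<open>N(C)\<close> with \<open>\<langle>q',\<bottom>\<rangle>\<close> replaced by \<open>\<phi>(q',p)[\<langle>q'',p\<rangle> \<leftarrow> q''\<^sub>M(s)]\<close>.
  Since \<open>M\<close> and \<open>N\<close> agree and \<open>N\<close> is total, the two substitutions yield the same defined
  tree, so they agree on every leaf of \<open>N(C)\<close>, in particular on \<open>\<langle>q,\<bottom>\<rangle>\<close>.\<close>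

lemma all_some_eq: "all_some xs = (if None \<in> set xs then None else Some (map the xs))"
  by (induction xs) (auto split: option.splits)

lemma subst_Nd:
  "subst \<sigma> (Nd f ts) = (if \<exists>t\<in>set ts. subst \<sigma> t = None then None
     else Some (Nd f (map (\<lambda>t. the (subst \<sigma> t)) ts)))"
proof (cases "\<exists>t\<in>set ts. subst \<sigma> t = None")
  case True
  then have "None \<in> set (map (subst \<sigma>) ts)" by (metis image_eqI set_map)
  then show ?thesis using True by (simp add: all_some_eq)
qed (auto simp: all_some_eq)

declare subst.simps(2)[simp del]

lemma subst_bind:
  "Option.bind (subst \<tau> t) (subst \<sigma>) = subst (\<lambda>x. Option.bind (\<tau> x) (subst \<sigma>)) t"
proof (induction t)
  case (Nd f ts)
  show ?case
  proof (cases "\<exists>t\<in>set ts. subst \<tau> t = None")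
    case True
    then show ?thesis using Nd.IH by (force simp: subst_Nd)
  next
    case False
    then have "\<And>t. t \<in> set ts \<Longrightarrow>
        subst (\<lambda>x. Option.bind (\<tau> x) (subst \<sigma>)) t = subst \<sigma> (the (subst \<tau> t))"
      using Nd.IH by force
    then show ?thesis using False by (auto simp: subst_Nd cong: map_cong)
  qed
qed simp

lemma subst_map_tr:
  "map_option (map_tr (\<lambda>a. a) g) (subst \<sigma> t) = subst (\<lambda>x. map_option (map_tr (\<lambda>a. a) g) (\<sigma> x)) t"
proof (induction t)
  case (Nd f ts)
  show ?case
  proof (cases "\<exists>t\<in>set ts. subst \<sigma> t = None")
    case True
    then show ?thesis using Nd.IH by (force simp: subst_Nd)
  next
    case False
    then have "\<And>t. t \<in> set ts \<Longrightarrow>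
        subst (\<lambda>x. map_option (map_tr (\<lambda>a. a) g) (\<sigma> x)) t = Some (map_tr (\<lambda>a. a) g (the (subst \<sigma> t)))"
      using Nd.IH by (metis option.collapse option.map(2))
    then show ?thesis using False by (auto simp: subst_Nd cong: map_cong)
  qed
qed simp

lemma subst_eq_imp_eq_on_vars:
  assumes "subst \<sigma>1 t = subst \<sigma>2 t" and "subst \<sigma>1 t \<noteq> None" and "x \<in> vars t"
  shows "\<sigma>1 x = \<sigma>2 x"
  using assms
proof (induction t)
  case (Nd f ts)
  then obtain t where t: "t \<in> set ts" "x \<in> vars t" by auto
  from Nd.prems have defined: "\<forall>t\<in>set ts. subst \<sigma>1 t \<noteq> None \<and> subst \<sigma>2 t \<noteq> None"
    and "map (\<lambda>t. the (subst \<sigma>1 t)) ts = map (\<lambda>t. the (subst \<sigma>2 t)) ts"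
    by (auto simp: subst_Nd split: if_splits)
  with t have "subst \<sigma>1 t = subst \<sigma>2 t" by (metis map_eq_conv option.expand)
  with Nd.IH t defined show ?case by blast
qed simp

fun plug :: "('f, 'v) tr \<Rightarrow> ('f, 'w) tr \<Rightarrow> ('f, 'w) tr" where
  "plug (Lf u) s = s"
| "plug (Nd a ts) s = Nd a (map (\<lambda>t. plug t s) ts)"

lemma plug_in_gtrees:
  assumes "C \<in> contexts \<Sigma>" and "s \<in> gtrees \<Sigma>"
  shows "plug C s \<in> gtrees \<Sigma>"
proof -
  have "wf_tr \<Sigma> C \<Longrightarrow> wf_tr \<Sigma> (plug C s) \<and> vars (plug C s) \<subseteq> vars s"
    using assms(2) by (induction C) (auto simp: gtrees_def trees_def)
  then show ?thesis
    using assms by (auto simp: contexts_def gtrees_def trees_def)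
qed

lemma laRun_plug: "laRun M \<eta> (plug C s) = laRun M (\<lambda>_. laRun M \<eta> s) C"
  by (induction C) (auto cong: map_cong)

lemma sem_plug:
  assumes "\<And>q'. \<sigma> (q', laRun M \<eta> s) = sem M \<eta> lo s q'"
  shows "sem M \<eta> lo (plug C s) q =
    Option.bind (sem M (\<lambda>_. laRun M \<eta> s) (\<lambda>_ q'. Some (Lf (q', laRun M \<eta> s))) C q) (subst \<sigma>)"
proof (induction C arbitrary: q)
  case (Nd a ts)
  have la: "map (laRun M \<eta> \<circ> (\<lambda>t. plug t s)) ts = map (laRun M (\<lambda>_. laRun M \<eta> s)) ts"
    by (simp add: laRun_plug)
  show ?case
  proof (cases "rules M q a (map (laRun M (\<lambda>_. laRun M \<eta> s)) ts)")
    case None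
    then show ?thesis by (simp add: la Let_def)
  next
    case (Some r)
    then show ?thesis
      by (simp add: la Let_def subst_bind)
        (intro arg_cong[where f = "\<lambda>f. subst f r"] ext; auto simp: Nd.IH)
  qed
qed (simp add: assms)

lemma Msem_plug:
  assumes "\<And>q. \<sigma> (q, deltaM M s) = qsem M q s"
  shows "Msem M (plug C s) = Option.bind (Mctx M C (deltaM M s)) (subst \<sigma>)"
proof -
  have "qsem M q (plug C s) =
      Option.bind (sem M (\<lambda>_. deltaM M s) (\<lambda>_ q'. Some (Lf (q', deltaM M s))) C q) (subst \<sigma>)" for q
    using sem_plug[of \<sigma> M "\<lambda>_. undefined" s "\<lambda>_ _. None" C q] assms
    by (simp add: qsem_def deltaM_def)
  moreover have "deltaM M (plug C s) = laRun M (\<lambda>_. deltaM M s) C"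
    by (simp add: deltaM_def laRun_plug)
  ultimately show ?thesis
    by (simp add: Msem_def Mctx_def subst_bind)
qed

text \<open>On ground trees the leaf type of the output is a free type parameter; since the output
  has no leaves, its choice is immaterial.\<close>

lemma sem_map_tr:
  "sem M \<eta> (\<lambda>v q. map_option (map_tr (\<lambda>a. a) g) (lo v q)) t q
     = map_option (map_tr (\<lambda>a. a) g) (sem M \<eta> lo t q)"
proof (induction t arbitrary: q)
  case (Nd a ts)
  show ?case
  proof (cases "rules M q a (map (laRun M \<eta>) ts)")
    case (Some r)
    then show ?thesis
      by (simp add: Let_def subst_map_tr)
        (intro arg_cong[where f = "\<lambda>f. subst f r"] ext; auto simp: Nd.IH)
  qed simp
qed simp

lemma Msem_map_tr:
  "(Msem M s :: ('g, 'z) tr option) = map_option (map_tr (\<lambda>a. a) (g :: 'w \<Rightarrow> 'z)) (Msem M s)"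
proof -
  have "(qsem M q s :: ('g, 'z) tr option) = map_option (map_tr (\<lambda>a. a) g) (qsem M q s)" for q
    using sem_map_tr[of M "\<lambda>_. undefined" g "\<lambda>_ _. None" s q] by (simp add: qsem_def)
  then show ?thesis
    by (simp add: Msem_def subst_map_tr)
qed

lemma deltaM_in_lastates:
  assumes "wf_dtla \<Sigma> \<Delta> M" and "s \<in> gtrees \<Sigma>"
  shows "deltaM M s \<in> lastates M"
proof -
  have "wf_tr \<Sigma> s" "vars s = {}"
    using assms(2) by (auto simp: gtrees_def trees_def)
  then show ?thesis
    unfolding deltaM_def
  proof (induction s)
    case (Nd a ts)
    then have "set (map (laRun M (\<lambda>_. undefined)) ts) \<subseteq> lastates M" "(a, length ts) \<in> \<Sigma>"
      by auto
    then show ?case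
      using assms(1) unfolding wf_dtla_def by simp
  qed simp
qed

theorem mainTheorem3:
  fixes \<Sigma> :: "('f \<times> nat) set" and \<Delta> :: "('g \<times> nat) set"
    and M :: "('f, 'g, 'q, 'p) dtla" and N :: "('f, 'g, 'n, unit) dtla"
    and \<phi> :: "'n \<Rightarrow> 'p \<Rightarrow> ('g, 'q \<times> 'p) tr"
  assumes "is_dtpla \<Sigma> \<Delta> M" and "canonical \<Sigma> M"
    and "is_dtop \<Sigma> \<Delta> N" and "total \<Sigma> N" and "\<forall>q \<in> states N. reachable \<Sigma> N q"
    and "\<forall>s \<in> gtrees \<Sigma>. Msem M s = (Msem N s :: ('g, unit) tr option)"
    and "aheadness \<Sigma> \<Delta> M N \<phi>"
  shows "\<forall>s \<in> gtrees \<Sigma>. \<forall>q \<in> states N. \<forall>p. deltaM M s = p \<longrightarrow>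
           qsem N q s = subst (\<lambda>(q', p'). if p' = p then qsem M q' s else Some (Lf (q', p'))) (\<phi> q p)"
proof (intro ballI allI impI)
  fix s q p
  assume s: "s \<in> gtrees \<Sigma>" and q: "q \<in> states N" and p: "deltaM M s = p"
  define \<sigma>M :: "'q \<times> 'p \<Rightarrow> ('g, 'q \<times> 'p) tr option" where
    "\<sigma>M = (\<lambda>(q', p'). if p' = p then qsem M q' s else Some (Lf (q', p')))"
  obtain C t where C: "C \<in> contexts \<Sigma>" and t: "Mctx N C () = Some t" and "(q, ()) \<in> vars t"
    using assms(5) q unfolding reachable_def by fastforce
  have "p \<in> lastates M"
    using deltaM_in_lastates assms(1) s p by (fastforce simp: is_dtpla_def)
  then have "Mctx M C p = subst (\<lambda>(q', _). Some (\<phi> q' p)) t"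
    using assms(7) C t by (simp add: aheadness_def)
  then have M_plug: "(Msem M (plug C s) :: ('g, 'q \<times> 'p) tr option)
      = subst (\<lambda>x. subst \<sigma>M (\<phi> (fst x) p)) t"
    by (simp add: Msem_plug[where \<sigma> = \<sigma>M] \<sigma>M_def p subst_bind case_prod_beta)
  have N_plug: "(Msem N (plug C s) :: ('g, 'q \<times> 'p) tr option) = subst (\<lambda>(q', _). qsem N q' s) t"
    by (simp add: Msem_plug[where \<sigma> = "\<lambda>(q', _). qsem N q' s"] t)
  have "(Msem N (plug C s) :: ('g, unit) tr option) = Msem M (plug C s)"
    and "(Msem N (plug C s) :: ('g, unit) tr option) \<noteq> None"
    using assms(4,6) plug_in_gtrees[OF C s] unfolding total_def by auto
  then have "(Msem N (plug C s) :: ('g, 'q \<times> 'p) tr option) = Msem M (plug C s)"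
    and "(Msem N (plug C s) :: ('g, 'q \<times> 'p) tr option) \<noteq> None"
    using Msem_map_tr[of M "plug C s" "\<lambda>_ :: unit. undefined :: 'q \<times> 'p"]
      Msem_map_tr[of N "plug C s" "\<lambda>_ :: unit. undefined :: 'q \<times> 'p"] by simp_all
  from subst_eq_imp_eq_on_vars[OF this[unfolded M_plug N_plug] \<open>(q, ()) \<in> vars t\<close>]
  show "qsem N q s = subst \<sigma>M (\<phi> q p)"
    by simp
qed

end
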